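(* Let $d,s,t,\ell$ be nonnegative integers with $s\ge 1$, $d \geq 2t-3$ and $t \geq \max\{4, \ell+3\}$, and let $\theta_{t,\ell}\in\Theta_{t,\ell}$. For any two edges of $W_d(s)$, the number of subgraphs of $W_d(s)$ isomorphic to $\theta_{t,\ell}$ that contain both of these edges and contain exactly one hub vertex of $W_d(s)$ is at most \[ N= \begin{cases} \max\{s(t-3),\, t-2\}, & \text{if } \theta_{t,\ell} = F_t,\\ s(t-3), & \text{if } \theta_{t,\ell} \neq F_t \text{ and } \mathbf{X}(\theta_{t,\ell}) \text{ is symmetric},\\ 2s(t-3), & \text{if } \mathbf{X}(\theta_{t,\ell}) \text{ is asymmetric}. \end{cases} \]
   Context: For $d \ge 3$ and $s \ge 1$, the $s$-hubbed wheel $W_d(s) = \overline{K_s} + C_d$ has vertex set $\{u_1,\dots,u_s\} \cup \{v_1,\dots,v_d\}$, where $v_1v_2\cdots v_dv_1$ is a cycle, the hub vertices $u_1,\dots,u_s$ are pairwise non-adjacent, and every $u_a$ is adjacent to every $v_i$. Edges $u_av_i$ are spokes; edges $v_iv_{i+1}$ (indices mod $d$) are rim edges. For $t\ge 3$ and $0 \le \ell \le t-3$, $\Theta_{t,\ell}$ is the class of graphs $\theta_{t,\ell}$ obtained from a cycle $v_1v_2\cdots v_tv_1$ by adding exactly $\ell$ chords $v_1v_{i_1},\dots,v_1v_{i_\ell}$ with $2<i_1<\cdots<i_\ell<t$. Its vector is $\mathbf{X}(\theta_{t,\ell}) = (2, i_1, \dots, i_\ell, t)$. The graph (or its vector) is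 symmetric if $\ell = 0$ or $i_j + i_{\ell+1-j} = t+2$ for every $j \le (\ell+1)/2$, and asymmetric otherwise. The fan $F_t$ is $\theta_{t,t-3}$, i.e., the $t$-cycle with all chords $v_1v_i$, $3\le i\le t-1$. *)

theory Defs
  imports Main
begin

text \<open>Graphs are given by edge sets; an edge is a 2-element vertex set.\<close>

text \<open>The s-hubbed wheel W_d(s): hub vertices Inl a (a < s), rim vertices Inr i (i < d),
  rim cycle Inr 0, Inr 1, ..., Inr (d-1), Inr 0.\<close>
definition hubs :: "nat \<Rightarrow> (nat + nat) set" where
  "hubs s = Inl ` {..<s}"

definition spokes :: "nat \<Rightarrow> nat \<Rightarrow> (nat + nat) set set" where
  "spokes d s = {{Inl a, Inr i} | a i. a < s \<and> i < d}"

definition rim_edges :: "nat \<Rightarrow> (nat + nat) set set" where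
  "rim_edges d = {{Inr i, Inr ((i + 1) mod d)} | i. i < d}"

definition wheel_edges :: "nat \<Rightarrow> nat \<Rightarrow> (nat + nat) set set" where
  "wheel_edges d s = spokes d s \<union> rim_edges d"

text \<open>theta_{t,l}: cycle v_1 ... v_t v_1 (vertices 1..t) plus the chords {1,i}, i \<in> I,
  where I = {i_1,...,i_l} with 2 < i_1 < ... < i_l < t.\<close>
definition theta_chord_set :: "nat \<Rightarrow> nat \<Rightarrow> nat set \<Rightarrow> bool" where
  "theta_chord_set t l I \<longleftrightarrow> I \<subseteq> {3..<t} \<and> card I = l"

definition theta_edges :: "nat \<Rightarrow> nat set \<Rightarrow> nat set set" where
  "theta_edges t I = {{i, i + 1} | i. 1 \<le> i \<and> i < t} \<union> {{t, 1}} \<union> {{1, i} | i. i \<in> I}"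

definition theta_vector :: "nat \<Rightarrow> nat set \<Rightarrow> nat list" where
  "theta_vector t I = [2] @ sorted_list_of_set I @ [t]"

text \<open>Symmetric: l = 0 or i_j + i_{l+1-j} = t + 2 for all 1 \<le> j \<le> (l+1)/2
  (chords indexed from 1, i.e. i_j = (sorted_list_of_set I) ! (j - 1)).\<close>
definition theta_symmetric :: "nat \<Rightarrow> nat set \<Rightarrow> bool" where
  "theta_symmetric t I \<longleftrightarrow>
     (let xs = sorted_list_of_set I; l = length xs in
       l = 0 \<or> (\<forall>j. 1 \<le> j \<and> 2 * j \<le> l + 1 \<longrightarrow> xs ! (j - 1) + xs ! (l - j) = t + 2))"

definition fan_chords :: "nat \<Rightarrow> nat set" where
  "fan_chords t = {3..<t}"

text \<open>An edge set H (a subgraph with vertex set \<Union>H; theta has no isolated vertices)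
  is isomorphic to theta_{t,l} with chord set I.\<close>
definition iso_theta :: "nat \<Rightarrow> nat set \<Rightarrow> 'v set set \<Rightarrow> bool" where
  "iso_theta t I H \<longleftrightarrow>
     (\<exists>f. bij_betw f {1..t} (\<Union>H) \<and> H = (\<lambda>e. f ` e) ` theta_edges t I)"

end

theory Submission
  imports Defs "HOL-Number_Theory.Cong"
begin

text \<open>
  Let H be a copy of theta_{t,l} in W_d(s) containing a single hub vertex u. Deleting u from the
  cycle of theta leaves a path on t - 1 rim vertices whose edges are rim edges. An injective walk
  with unit steps around the rim keeps its direction, so the path is a segment j, ..., j + t - 2
  of the rim, read forwards or backwards. As t < d, vertices of the segment that are not
  consecutive are not adjacent, hence every chord of theta is incident to u. So H is determined
  by its hub, by j and by the offsets of its spokes along the segment, which are X(theta) - 2 or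
  their reflection z \<mapsto> t - 2 - z; the two coincide when theta is symmetric.

  For a fixed set of offsets we count the pairs (hub, j) whose copy contains two given edges.
  Because 2 (t - 1) \<le> d + 1, whenever the shifted offsets x + j and y + j hit the two edges, the
  difference D = y - x is the same nonzero number, and j is determined by x. An interval of
  length t - 2 contains at most t - 3 pairs with difference D, which gives s (t - 3) copies
  through two rim edges. A spoke fixes the hub, and then there are at most t - 2 pairs, and at
  most t - 3 unless the offsets fill the whole interval, that is, unless theta is the fan.
\<close>

section \<open>Placements of one-hub copies\<close>

definition rim_edge :: "nat \<Rightarrow> nat \<Rightarrow> (nat + nat) set" where
  "rim_edge d k = {Inr (k mod d), Inr (Suc k mod d)}"

text \<open>The copy of theta with hub Inl a whose other vertices form the rim path Inr j, ...,
  Inr (j + t - 2) (indices mod d), the hub being joined to the path vertices at the offsets Z.\<close>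
definition hub_copy :: "nat \<Rightarrow> nat \<Rightarrow> nat \<Rightarrow> nat \<Rightarrow> nat set \<Rightarrow> (nat + nat) set set" where
  "hub_copy d t a j Z =
     {rim_edge d (j + r) | r. r < t - 2} \<union> {{Inl a, Inr ((j + z) mod d)} | z. z \<in> Z}"

lemma rim_edge_eq_iff:
  assumes "3 \<le> d"
  shows "rim_edge d x = rim_edge d y \<longleftrightarrow> x mod d = y mod d"
proof
  assume same: "rim_edge d x = rim_edge d y"
  show "x mod d = y mod d"
  proof (rule ccontr)
    assume "x mod d \<noteq> y mod d"
    with same have "x mod d = Suc y mod d" "Suc x mod d = y mod d"
      unfolding rim_edge_def by (auto simp: doubleton_eq_iff)
    then have "Suc (Suc x) mod d = x mod d"
      by (metis mod_Suc_eq)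
    then have "d dvd 2"
      using mod_eq_dvd_iff_nat[of x "Suc (Suc x)" d] by simp
    with assms show False
      using dvd_imp_le[of d 2] by simp
  qed
qed (metis rim_edge_def mod_Suc_eq)

lemma wheel_edge_cases:
  assumes "e \<in> wheel_edges d s"
  obtains (spoke) b x where "b < s" "x < d" "e = {Inl b, Inr x}"
    | (rim) k where "k < d" "e = rim_edge d k"
  using assms unfolding wheel_edges_def spokes_def rim_edges_def rim_edge_def by auto

lemma rim_vertices_adjacent:
  assumes "{Inr x, Inr y} \<in> wheel_edges d s"
  shows "y = Suc x mod d \<or> x = Suc y mod d"
  using assms unfolding wheel_edges_def spokes_def rim_edges_def by (auto simp: doubleton_eq_iff)

lemma rim_edge_in_hub_copy_iff:
  assumes "3 \<le> d" "k < d"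
  shows "rim_edge d k \<in> hub_copy d t a j Z \<longleftrightarrow> (\<exists>r<t - 2. (j + r) mod d = k)"
proof -
  have "rim_edge d k \<noteq> {Inl a, Inr x}" for x
    unfolding rim_edge_def by auto
  then have "rim_edge d k \<in> hub_copy d t a j Z \<longleftrightarrow> (\<exists>r<t - 2. rim_edge d (j + r) = rim_edge d k)"
    unfolding hub_copy_def by auto
  with assms show ?thesis
    by (simp add: rim_edge_eq_iff)
qed

lemma rim_edge_in_hub_copy: "r < t - 2 \<Longrightarrow> rim_edge d (j + r) \<in> hub_copy d t a j Z"
  unfolding hub_copy_def by blast

lemma spoke_in_hub_copy: "z \<in> Z \<Longrightarrow> {Inl a, Inr ((j + z) mod d)} \<in> hub_copy d t a j Z"
  unfolding hub_copy_def by blast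

lemma spoke_in_hub_copy_iff:
  assumes "x < d"
  shows "{Inl b, Inr x} \<in> hub_copy d t a j Z \<longleftrightarrow> b = a \<and> (\<exists>z\<in>Z. (j + z) mod d = x)"
  using assms unfolding hub_copy_def rim_edge_def by (auto simp: doubleton_eq_iff)

lemma cong_int_eq_if_abs_less:
  fixes a b m :: int
  assumes "[a = b] (mod m)" "\<bar>a - b\<bar> < m"
  shows "a = b"
  using assms dvd_imp_le_int[of "a - b" m] by (force simp: cong_iff_dvd_diff)

lemma shift_diff_cong:
  assumes "(j + x) mod d = u" "(j + y) mod d = v"
  shows "[int y - int x = int v - int u] (mod int d)"
proof -
  have "[j + x = u] (mod d)" "[j + y = v] (mod d)"
    using assms by (auto simp: cong_def)
  then have "[int j + int x = int u] (mod int d)" "[int j + int y = int v] (mod int d)"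
    by (metis cong_int_iff of_nat_add)+
  then show ?thesis
    using cong_diff by fastforce
qed

lemma shift_diff_unique:
  assumes "(j + x) mod d = u" "(j + y) mod d = v" "(j' + x') mod d = u" "(j' + y') mod d = v"
    and "x < n" "y < n" "x' < n" "y' < n" "2 * n \<le> d + 1"
  shows "int y - int x = int y' - int x'"
proof -
  have "[int y - int x = int y' - int x'] (mod int d)"
    using shift_diff_cong[OF assms(1,2)] shift_diff_cong[OF assms(3,4)] by (meson cong_sym cong_trans)
  moreover have "\<bar>(int y - int x) - (int y' - int x')\<bar> < int d"
    using assms(5-9) by linarith
  ultimately show ?thesis
    by (rule cong_int_eq_if_abs_less)
qed

definition common_shifts :: "nat \<Rightarrow> nat set \<Rightarrow> nat \<Rightarrow> nat set \<Rightarrow> nat \<Rightarrow> nat set" where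
  "common_shifts d X u Y v =
     {j. j < d \<and> (\<exists>x\<in>X. (j + x) mod d = u) \<and> (\<exists>y\<in>Y. (j + y) mod d = v)}"

lemma finite_common_shifts: "finite (common_shifts d X u Y v)"
  unfolding common_shifts_def by (rule finite_subset[of _ "{..<d}"]) auto

definition diff_reps :: "nat set \<Rightarrow> nat set \<Rightarrow> int \<Rightarrow> nat set" where
  "diff_reps X Y D = {x \<in> X. int x + D \<in> int ` Y}"

lemma card_common_shifts_le:
  assumes X: "X \<subseteq> {..<n}" and Y: "Y \<subseteq> {..<n}" and dn: "2 * n \<le> d + 1"
  obtains D where "[D = int v - int u] (mod int d)"
    "card (common_shifts d X u Y v) \<le> card (diff_reps X Y D)"
proof (cases "common_shifts d X u Y v = {}")
  case True
  then show ?thesis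
    using that[of "int v - int u"] by simp
next
  case False
  then obtain j0 x0 y0 where j0: "x0 \<in> X" "(j0 + x0) mod d = u" "y0 \<in> Y" "(j0 + y0) mod d = v"
    unfolding common_shifts_def by blast
  define D where "D = int y0 - int x0"
  have "common_shifts d X u Y v \<subseteq> (\<lambda>x. nat ((int u - int x) mod int d)) ` diff_reps X Y D"
  proof
    fix j assume "j \<in> common_shifts d X u Y v"
    then obtain x y where j: "j < d" "x \<in> X" "(j + x) mod d = u" "y \<in> Y" "(j + y) mod d = v"
      unfolding common_shifts_def by blast
    have "x < n" "y < n" "x0 < n" "y0 < n"
      using j(2,4) j0(1,3) X Y by auto
    then have "int y - int x = D"
      unfolding D_def by (rule shift_diff_unique[OF j(3,5) j0(2,4) _ _ _ _ dn])
    then have "x \<in> diff_reps X Y D"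
      using j(2,4) unfolding diff_reps_def by force
    moreover have "(int u - int x) mod int d = (int j + int x - int x) mod int d"
      using j(3) by (metis mod_diff_left_eq of_nat_add zmod_int)
    then have "j = nat ((int u - int x) mod int d)"
      using j(1) by simp
    ultimately show "j \<in> (\<lambda>x. nat ((int u - int x) mod int d)) ` diff_reps X Y D"
      by blast
  qed
  moreover have "finite (diff_reps X Y D)"
    using X finite_subset unfolding diff_reps_def by fastforce
  ultimately have "card (common_shifts d X u Y v) \<le> card (diff_reps X Y D)"
    using card_image_le card_mono finite_imageI order_trans by meson
  moreover have "[D = int v - int u] (mod int d)"
    unfolding D_def using shift_diff_cong[OF j0(2,4)] .
  ultimately show ?thesis
    using that by blast
qed

lemma cong_diff_neq_zero:
  assumes "[D = int c2 - int c1] (mod int d)" "c1 < d" "c2 < d" "c1 \<noteq> c2"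
  shows "D \<noteq> 0"
proof
  assume "D = 0"
  with assms(1) have "[int c1 = int c2] (mod int d)"
    by (metis cong_iff_dvd_diff cong_sym diff_0 dvd_minus_iff minus_diff_eq)
  with assms(2-4) show False
    by (simp add: cong_int_iff cong_def)
qed

lemma card_diff_reps_self_le:
  assumes "D \<noteq> 0" "finite Z" "Z \<noteq> {}"
  shows "card (diff_reps Z Z D) \<le> card Z - 1"
proof -
  obtain w where w: "w \<in> Z" "w \<notin> diff_reps Z Z D"
  proof (cases "D > 0")
    case True
    have "Max Z \<notin> diff_reps Z Z D"
      using True assms(2) Max_ge unfolding diff_reps_def by fastforce
    with that show ?thesis
      using Max_in assms(2,3) by blast
  next
    case False
    have "Min Z \<notin> diff_reps Z Z D"
      using False assms(1,2) Min_le unfolding diff_reps_def by fastforce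
    with that show ?thesis
      using Min_in assms(2,3) by blast
  qed
  have "diff_reps Z Z D \<subseteq> Z - {w}"
    using w unfolding diff_reps_def by blast
  then have "card (diff_reps Z Z D) \<le> card (Z - {w})"
    using assms(2) by (intro card_mono) auto
  with w(1) assms(2) show ?thesis
    by simp
qed

lemma card_diff_reps_interval_le:
  assumes "D \<noteq> 0"
  shows "card (diff_reps {..<m} {..<m} D) \<le> m - 1"
proof (cases "m = 0")
  case True
  then show ?thesis
    by (simp add: diff_reps_def)
next
  case False
  then show ?thesis
    using card_diff_reps_self_le[OF assms finite_lessThan, of m] by auto
qed

lemma card_diff_reps_into_proper_le:
  assumes Z: "Z \<subseteq> {..m}" "0 \<in> Z" "m \<in> Z" "Z \<noteq> {..m}"
  shows "card (diff_reps {..<m} Z D) \<le> m - 1"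
proof (rule ccontr)
  assume "\<not> ?thesis"
  then have "card {..<m} \<le> card (diff_reps {..<m} Z D)"
    by simp
  then have "diff_reps {..<m} Z D = {..<m}"
    by (intro card_seteq) (auto simp: diff_reps_def)
  then have rep: "int z + D \<in> int ` Z" if "z < m" for z
    using that unfolding diff_reps_def by blast
  have "m \<noteq> 0"
    using Z by auto
  then obtain u v where "u \<in> Z" "int u = D" "v \<in> Z" "int v = int (m - 1) + D"
    using rep[of 0] rep[of "m - 1"] by auto
  moreover have "v \<le> m"
    using \<open>v \<in> Z\<close> Z(1) by auto
  ultimately have D: "D = 0 \<or> D = 1"
    using \<open>m \<noteq> 0\<close> by linarith
  have "x \<in> Z" if "x \<le> m" for x
  proof (cases "x = m \<or> (D = 1 \<and> x = 0)")
    case True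
    then show ?thesis
      using Z(2,3) by auto
  next
    case False
    then have "x - nat D < m" and shift: "int (x - nat D) + D = int x"
      using D that by auto
    then have "int x \<in> int ` Z"
      using rep[of "x - nat D"] unfolding shift by blast
    then show ?thesis
      by auto
  qed
  with Z(1,4) show False
    by auto
qed

definition placements ::
    "nat \<Rightarrow> nat \<Rightarrow> nat \<Rightarrow> nat set \<Rightarrow> (nat + nat) set \<Rightarrow> (nat + nat) set \<Rightarrow> (nat \<times> nat) set" where
  "placements d s t Z e1 e2 =
     {(a, j). a < s \<and> j < d \<and> e1 \<in> hub_copy d t a j Z \<and> e2 \<in> hub_copy d t a j Z}"

definition placement_bound :: "nat \<Rightarrow> nat \<Rightarrow> nat set \<Rightarrow> nat" where
  "placement_bound s t Z = (if Z = {..t - 2} then max (s * (t - 3)) (t - 2) else s * (t - 3))"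

lemma le_placement_bound_any_hub: "c \<le> s * (t - 3) \<Longrightarrow> c \<le> placement_bound s t Z"
  unfolding placement_bound_def by auto

lemma le_placement_bound_fixed_hub:
  assumes "1 \<le> s" "c \<le> t - 2" "Z \<noteq> {..t - 2} \<Longrightarrow> c \<le> t - 3"
  shows "c \<le> placement_bound s t Z"
proof (cases "Z = {..t - 2}")
  case True
  with assms(2) show ?thesis
    unfolding placement_bound_def by (simp add: le_max_iff_disj)
next
  case False
  have "c \<le> t - 3"
    using assms(3) False .
  also have "t - 3 \<le> s * (t - 3)"
    using assms(1) by simp
  finally show ?thesis
    by (rule le_placement_bound_any_hub)
qed

lemma placements_commute: "placements d s t Z e1 e2 = placements d s t Z e2 e1"
  unfolding placements_def by blast

lemma card_placements_fixed_hub_le: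
  assumes "placements d s t Z e1 e2 \<subseteq> {b} \<times> J" "finite J"
  shows "card (placements d s t Z e1 e2) \<le> card J"
  using card_mono[OF _ assms(1)] assms(2) by (simp add: card_cartesian_product_singleton)

context
  fixes d t :: nat and Z :: "nat set"
  assumes d: "2 * t - 3 \<le> d" and t: "3 \<le> t"
    and Z: "Z \<subseteq> {..t - 2}" "0 \<in> Z" "t - 2 \<in> Z"
begin

lemma window_bounds: "{..<t - 2} \<subseteq> {..<t - 1}" "Z \<subseteq> {..<t - 1}" "2 * (t - 1) \<le> d + 1"
  using Z(1) d t by auto

lemma card_placements_rim_rim:
  assumes "k1 < d" "k2 < d" "k1 \<noteq> k2"
  shows "card (placements d s t Z (rim_edge d k1) (rim_edge d k2)) \<le> s * (t - 3)"
proof -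
  obtain D where D: "[D = int k2 - int k1] (mod int d)"
    "card (common_shifts d {..<t - 2} k1 {..<t - 2} k2) \<le> card (diff_reps {..<t - 2} {..<t - 2} D)"
    using card_common_shifts_le[OF window_bounds(1,1,3), where u=k1 and v=k2] by blast
  have "D \<noteq> 0"
    using cong_diff_neq_zero[OF D(1) assms] .
  then have shifts: "card (common_shifts d {..<t - 2} k1 {..<t - 2} k2) \<le> t - 3"
    using D(2) card_diff_reps_interval_le[of D "t - 2"] by simp
  have "placements d s t Z (rim_edge d k1) (rim_edge d k2)
      = {..<s} \<times> common_shifts d {..<t - 2} k1 {..<t - 2} k2"
    using assms d t by (auto simp: placements_def common_shifts_def rim_edge_in_hub_copy_iff)
  with shifts show ?thesis
    by (simp add: card_cartesian_product)
qed

lemma card_placements_rim_spoke: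
  assumes "k < d" "x < d"
  shows "card (placements d s t Z (rim_edge d k) {Inl b, Inr x}) \<le> t - 2"
    and "Z \<noteq> {..t - 2} \<Longrightarrow> card (placements d s t Z (rim_edge d k) {Inl b, Inr x}) \<le> t - 3"
proof -
  obtain D where D: "card (common_shifts d {..<t - 2} k Z x) \<le> card (diff_reps {..<t - 2} Z D)"
    using card_common_shifts_le[OF window_bounds, where u=k and v=x] by blast
  have "placements d s t Z (rim_edge d k) {Inl b, Inr x} \<subseteq> {b} \<times> common_shifts d {..<t - 2} k Z x"
    using assms d t
    by (auto simp: placements_def common_shifts_def rim_edge_in_hub_copy_iff spoke_in_hub_copy_iff)
  then have "card (placements d s t Z (rim_edge d k) {Inl b, Inr x}) \<le> card (common_shifts d {..<t - 2} k Z x)"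
    by (rule card_placements_fixed_hub_le[OF _ finite_common_shifts])
  also have "\<dots> \<le> card (diff_reps {..<t - 2} Z D)"
    by (rule D)
  finally have placed: "card (placements d s t Z (rim_edge d k) {Inl b, Inr x}) \<le> card (diff_reps {..<t - 2} Z D)" .
  have "card (diff_reps {..<t - 2} Z D) \<le> card {..<t - 2}"
    by (rule card_mono) (auto simp: diff_reps_def)
  with placed show "card (placements d s t Z (rim_edge d k) {Inl b, Inr x}) \<le> t - 2"
    by simp
  show "card (placements d s t Z (rim_edge d k) {Inl b, Inr x}) \<le> t - 3" if "Z \<noteq> {..t - 2}"
    using placed card_diff_reps_into_proper_le[OF Z that, of D] by simp
qed

lemma card_placements_spoke_spoke_le_card:
  assumes "x1 < d" "x2 < d" "{Inl b1, Inr x1} \<noteq> {Inl b2, Inr x2}"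
  shows "card (placements d s t Z {Inl b1, Inr x1} {Inl b2, Inr x2}) \<le> card Z - 1"
proof (cases "b1 = b2")
  case False
  then have "placements d s t Z {Inl b1, Inr x1} {Inl b2, Inr x2} = {}"
    using assms by (auto simp: placements_def spoke_in_hub_copy_iff)
  then show ?thesis
    by simp
next
  case True
  with assms(3) have "x1 \<noteq> x2"
    by auto
  obtain D where D: "[D = int x2 - int x1] (mod int d)"
    "card (common_shifts d Z x1 Z x2) \<le> card (diff_reps Z Z D)"
    using card_common_shifts_le[OF window_bounds(2,2,3), where u=x1 and v=x2] by blast
  have "placements d s t Z {Inl b1, Inr x1} {Inl b2, Inr x2} \<subseteq> {b1} \<times> common_shifts d Z x1 Z x2"
    using assms True by (auto simp: placements_def common_shifts_def spoke_in_hub_copy_iff)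
  then have "card (placements d s t Z {Inl b1, Inr x1} {Inl b2, Inr x2}) \<le> card (common_shifts d Z x1 Z x2)"
    by (rule card_placements_fixed_hub_le[OF _ finite_common_shifts])
  also have "\<dots> \<le> card (diff_reps Z Z D)"
    by (rule D(2))
  also have "\<dots> \<le> card Z - 1"
    using card_diff_reps_self_le cong_diff_neq_zero[OF D(1) assms(1,2) \<open>x1 \<noteq> x2\<close>]
      finite_subset[OF Z(1)] Z(2) by blast
  finally show ?thesis .
qed

lemma card_placements_spoke_spoke:
  assumes "x1 < d" "x2 < d" "{Inl b1, Inr x1} \<noteq> {Inl b2, Inr x2}"
  shows "card (placements d s t Z {Inl b1, Inr x1} {Inl b2, Inr x2}) \<le> t - 2"
    and "Z \<noteq> {..t - 2} \<Longrightarrow> card (placements d s t Z {Inl b1, Inr x1} {Inl b2, Inr x2}) \<le> t - 3"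
proof -
  have placed: "card (placements d s t Z {Inl b1, Inr x1} {Inl b2, Inr x2}) \<le> card Z - 1"
    by (rule card_placements_spoke_spoke_le_card[OF assms])
  have "card Z \<le> card {..t - 2}"
    using card_mono[OF finite_atMost Z(1)] .
  with placed t show "card (placements d s t Z {Inl b1, Inr x1} {Inl b2, Inr x2}) \<le> t - 2"
    by simp
  show "card (placements d s t Z {Inl b1, Inr x1} {Inl b2, Inr x2}) \<le> t - 3" if "Z \<noteq> {..t - 2}"
  proof -
    have "card Z < card {..t - 2}"
      using psubset_card_mono[OF finite_atMost] Z(1) that by blast
    with placed t show ?thesis
      by simp
  qed
qed

lemma card_placements_le:
  assumes "e1 \<in> wheel_edges d s" "e2 \<in> wheel_edges d s" "e1 \<noteq> e2" "1 \<le> s"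
  shows "card (placements d s t Z e1 e2) \<le> placement_bound s t Z"
  using assms(1)
proof (cases rule: wheel_edge_cases)
  case e1: (spoke b1 x1)
  from assms(2) show ?thesis
  proof (cases rule: wheel_edge_cases)
    case e2: (spoke b2 x2)
    with e1 assms(3) have distinct: "{Inl b1, Inr x1} \<noteq> {Inl b2, Inr x2}"
      by simp
    show ?thesis
      unfolding e1(3) e2(3) using le_placement_bound_fixed_hub[OF assms(4)]
        card_placements_spoke_spoke[OF e1(2) e2(2) distinct] .
  next
    case e2: (rim k2)
    show ?thesis
      unfolding e1(3) e2(2) placements_commute[of _ _ _ _ "{Inl b1, Inr x1}"]
      using le_placement_bound_fixed_hub[OF assms(4)] card_placements_rim_spoke[OF e2(1) e1(2)] .
  qed
next
  case e1: (rim k1)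
  from assms(2) show ?thesis
  proof (cases rule: wheel_edge_cases)
    case e2: (spoke b2 x2)
    show ?thesis
      unfolding e1(2) e2(3)
      using le_placement_bound_fixed_hub[OF assms(4)] card_placements_rim_spoke[OF e1(1) e2(2)] .
  next
    case e2: (rim k2)
    with e1 assms(3) show ?thesis
      using le_placement_bound_any_hub card_placements_rim_rim by blast
  qed
qed

end

section \<open>Spoke offsets\<close>

text \<open>The vector X(theta) minus 2: the positions of the neighbours of v_1 on the path v_2, ..., v_t.\<close>
definition spoke_offsets :: "nat \<Rightarrow> nat set \<Rightarrow> nat set" where
  "spoke_offsets t I = {0, t - 2} \<union> (\<lambda>i. i - 2) ` I"

definition reflect_offsets :: "nat \<Rightarrow> nat set \<Rightarrow> nat set" where
  "reflect_offsets t Z = (\<lambda>z. t - 2 - z) ` Z"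

lemma spoke_offsets_ends [simp]: "0 \<in> spoke_offsets t I" "t - 2 \<in> spoke_offsets t I"
  unfolding spoke_offsets_def by auto

lemma spoke_offsets_subset:
  assumes "I \<subseteq> {3..<t}"
  shows "spoke_offsets t I \<subseteq> {..t - 2}"
proof -
  have "i - 2 \<le> t - 2" if "i \<in> I" for i
    using subsetD[OF assms that] by (simp add: diff_le_mono)
  then show ?thesis
    unfolding spoke_offsets_def by auto
qed

lemma reflect_offsets_subset: "reflect_offsets t Z \<subseteq> {..t - 2}"
  unfolding reflect_offsets_def by auto

lemma reflect_offsets_ends:
  assumes "0 \<in> Z" "t - 2 \<in> Z"
  shows "0 \<in> reflect_offsets t Z" "t - 2 \<in> reflect_offsets t Z"
  using assms unfolding reflect_offsets_def by force+

lemma reflect_reflect_offsets: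
  assumes "Z \<subseteq> {..t - 2}"
  shows "reflect_offsets t (reflect_offsets t Z) = Z"
proof -
  have "reflect_offsets t (reflect_offsets t Z) = (\<lambda>z. t - 2 - (t - 2 - z)) ` Z"
    unfolding reflect_offsets_def image_image ..
  also have "\<dots> = (\<lambda>z. z) ` Z"
    using assms by (intro image_cong) auto
  finally show ?thesis
    by simp
qed

lemma reflect_offsets_atMost: "reflect_offsets t {..t - 2} = {..t - 2}"
proof (rule subset_antisym[OF reflect_offsets_subset])
  show "{..t - 2} \<subseteq> reflect_offsets t {..t - 2}"
  proof
    fix z assume "z \<in> {..t - 2}"
    then have "z = t - 2 - (t - 2 - z)" "t - 2 - z \<in> {..t - 2}"
      by auto
    then show "z \<in> reflect_offsets t {..t - 2}"
      unfolding reflect_offsets_def by blast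
  qed
qed

lemma reflect_offsets_eq_atMost_iff:
  assumes "Z \<subseteq> {..t - 2}"
  shows "reflect_offsets t Z = {..t - 2} \<longleftrightarrow> Z = {..t - 2}"
  using reflect_offsets_atMost reflect_reflect_offsets[OF assms] by metis

lemma spoke_offsets_eq_atMost_iff:
  assumes "I \<subseteq> {3..<t}"
  shows "spoke_offsets t I = {..t - 2} \<longleftrightarrow> I = fan_chords t"
proof
  assume full: "spoke_offsets t I = {..t - 2}"
  have "i \<in> I" if "i \<in> {3..<t}" for i
  proof -
    have "i - 2 \<in> spoke_offsets t I"
      unfolding full using that by (simp add: diff_le_mono)
    moreover have "i - 2 \<noteq> 0" "i - 2 \<noteq> t - 2"
      using that by auto
    ultimately obtain i' where "i' \<in> I" "i - 2 = i' - 2"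
      unfolding spoke_offsets_def by auto
    moreover have "3 \<le> i'"
      using subsetD[OF assms \<open>i' \<in> I\<close>] by simp
    ultimately have "i = i'"
      using that by arith
    with \<open>i' \<in> I\<close> show ?thesis
      by simp
  qed
  with assms show "I = fan_chords t"
    unfolding fan_chords_def by blast
next
  assume "I = fan_chords t"
  then have "z \<in> spoke_offsets t I" if "z \<le> t - 2" for z
  proof (cases "z = 0 \<or> z = t - 2")
    case False
    with that \<open>I = fan_chords t\<close> have "z + 2 \<in> I"
      unfolding fan_chords_def by auto
    then show ?thesis
      unfolding spoke_offsets_def by (intro UnI2 image_eqI[of _ _ "z + 2"]) simp_all
  qed auto
  with spoke_offsets_subset[OF assms] show "spoke_offsets t I = {..t - 2}"
    by auto
qed

lemma theta_symmetric_mirror: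
  assumes I: "I \<subseteq> {3..<t}" and sym: "theta_symmetric t I" and "i \<in> I"
  shows "t + 2 - i \<in> I"
proof -
  define xs where "xs = sorted_list_of_set I"
  define l where "l = length xs"
  have "finite I"
    using I finite_subset by blast
  then have set_xs: "set xs = I"
    unfolding xs_def by simp
  obtain k where k: "k < l" "xs ! k = i"
    using \<open>i \<in> I\<close> set_xs unfolding l_def by (metis in_set_conv_nth)
  then have pairs: "xs ! (j - 1) + xs ! (l - j) = t + 2" if "1 \<le> j" "2 * j \<le> l + 1" for j
    using sym that unfolding theta_symmetric_def Let_def xs_def[symmetric] l_def[symmetric] by auto
  have "xs ! k + xs ! (l - Suc k) = t + 2"
  proof (cases "2 * (k + 1) \<le> l + 1")
    case True
    then show ?thesis
      using pairs[of "k + 1"] by simp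
  next
    case False
    then have "xs ! (l - k - 1) + xs ! (l - (l - k)) = t + 2"
      using pairs[of "l - k"] k by auto
    moreover have "l - (l - k) = k" "l - k - 1 = l - Suc k"
      using k by auto
    ultimately show ?thesis
      by simp
  qed
  moreover have "xs ! (l - Suc k) \<in> I"
    using set_xs k unfolding l_def by (metis diff_Suc_less less_nat_zero_code not_gr_zero nth_mem)
  ultimately show ?thesis
    using k by (metis add_diff_cancel_left')
qed

lemma reflect_spoke_offsets_symmetric:
  assumes I: "I \<subseteq> {3..<t}" and sym: "theta_symmetric t I"
  shows "reflect_offsets t (spoke_offsets t I) = spoke_offsets t I"
proof -
  have mirror: "t - 2 - (i - 2) = (t + 2 - i) - 2" "t + 2 - i \<in> I" if "i \<in> I" for i
  proof -
    have "3 \<le> i" "i < t"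
      using subsetD[OF I that] by auto
    then show "t - 2 - (i - 2) = (t + 2 - i) - 2"
      by simp
    show "t + 2 - i \<in> I"
      using theta_symmetric_mirror[OF I sym that] .
  qed
  have sub: "reflect_offsets t (spoke_offsets t I) \<subseteq> spoke_offsets t I"
  proof
    fix w assume "w \<in> reflect_offsets t (spoke_offsets t I)"
    then obtain z where z: "z \<in> spoke_offsets t I" "w = t - 2 - z"
      unfolding reflect_offsets_def by blast
    then consider "z = 0" | "z = t - 2" | i where "i \<in> I" "z = i - 2"
      unfolding spoke_offsets_def by blast
    then show "w \<in> spoke_offsets t I"
    proof cases
      case 3
      with z(2) mirror have "w = (t + 2 - i) - 2" "t + 2 - i \<in> I"
        by simp_all
      then show ?thesis
        unfolding spoke_offsets_def by blast
    qed (use z(2) in simp_all)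
  qed
  have "spoke_offsets t I = reflect_offsets t (reflect_offsets t (spoke_offsets t I))"
    using reflect_reflect_offsets[OF spoke_offsets_subset[OF I]] by simp
  also have "\<dots> \<subseteq> reflect_offsets t (spoke_offsets t I)"
    using sub unfolding reflect_offsets_def by blast
  finally show ?thesis
    using sub by blast
qed

section \<open>Walks around a cycle\<close>

lemma mod_add_left_cancel_less:
  fixes a b j d :: nat
  assumes "(j + a) mod d = (j + b) mod d" "a < d" "b < d"
  shows "a = b"
proof -
  have "a mod d = b mod d"
    using assms(1) by (simp add: nat_mod_eq_iff)
  with assms(2,3) show ?thesis
    by simp
qed

definition cycle_succ :: "nat \<Rightarrow> nat \<Rightarrow> nat" where
  "cycle_succ t v = (if v = t then 1 else v + 1)"

definition cycle_walk :: "nat \<Rightarrow> nat \<Rightarrow> nat \<Rightarrow> nat" where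
  "cycle_walk t m q = (m - 1 + q) mod t + 1"

lemma cycle_walk_in_range: "0 < t \<Longrightarrow> cycle_walk t m q \<in> {1..t}"
  unfolding cycle_walk_def by (simp add: Suc_leI)

context
  fixes t m :: nat
  assumes m: "m \<in> {1..t}"
begin

lemma cycle_walk_0 [simp]: "cycle_walk t m 0 = m"
  using m unfolding cycle_walk_def by auto

lemma cycle_walk_period: "cycle_walk t m t = m"
proof -
  obtain m' where "m = Suc m'"
    using m by (cases m) auto
  with m show ?thesis
    unfolding cycle_walk_def by simp
qed

lemma cycle_walk_Suc: "cycle_walk t m (Suc q) = cycle_succ t (cycle_walk t m q)"
proof -
  have "(m - 1 + Suc q) mod t = (if (m - 1 + q) mod t + 1 = t then 0 else (m - 1 + q) mod t + 1)"
    by (simp add: mod_Suc)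
  then show ?thesis
    unfolding cycle_walk_def cycle_succ_def by simp
qed

lemma cycle_walk_inj: "q < t \<Longrightarrow> q' < t \<Longrightarrow> cycle_walk t m q = cycle_walk t m q' \<Longrightarrow> q = q'"
  unfolding cycle_walk_def using mod_add_left_cancel_less[of "m - 1" q t q'] by simp

lemma cycle_walk_surj:
  assumes "x \<in> {1..t}"
  obtains q where "q < t" "cycle_walk t m q = x"
proof -
  have "inj_on (cycle_walk t m) {..<t}"
    using cycle_walk_inj by (meson inj_onI lessThan_iff)
  then have "card (cycle_walk t m ` {..<t}) = card {1..t}"
    by (simp add: card_image)
  moreover have "cycle_walk t m ` {..<t} \<subseteq> {1..t}"
    using cycle_walk_in_range m by auto
  ultimately have "cycle_walk t m ` {..<t} = {1..t}"
    by (intro card_subset_eq) auto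
  with assms that show ?thesis
    by (metis imageE lessThan_iff)
qed

end

lemma theta_edge_iff:
  assumes "x \<in> {1..t}" "y \<in> {1..t}" "3 \<le> t"
  shows "{x, y} \<in> theta_edges t I \<longleftrightarrow>
    y = cycle_succ t x \<or> x = cycle_succ t y \<or> (x = 1 \<and> y \<in> I) \<or> (y = 1 \<and> x \<in> I)"
  using assms unfolding theta_edges_def cycle_succ_def by (auto simp: doubleton_eq_iff split: if_splits)

lemma theta_edge_cases:
  assumes "e \<in> theta_edges t I" "I \<subseteq> {3..<t}" "3 \<le> t"
  obtains x y where "e = {x, y}" "x \<in> {1..t}" "y \<in> {1..t}" "x \<noteq> y"
    "y = cycle_succ t x \<or> (x = 1 \<and> y \<in> I)"
proof -
  consider (path) i where "e = {i, i + 1}" "1 \<le> i" "i < t" | (closing) "e = {t, 1}"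
    | (chord) i where "e = {1, i}" "i \<in> I"
    using assms(1) unfolding theta_edges_def by blast
  then show ?thesis
  proof cases
    case (path i)
    then show ?thesis
      using that[of i "i + 1"] by (simp add: cycle_succ_def)
  next
    case closing
    then show ?thesis
      using that[of t 1] assms(3) by (simp add: cycle_succ_def)
  next
    case (chord i)
    then show ?thesis
      using that[of 1 i] assms(2,3) by auto
  qed
qed

lemma unit_walk_forward:
  assumes "x 0 < d" "\<forall>i<N. x (Suc i) = Suc (x i) mod d"
  shows "\<forall>i\<le>N. x i = (x 0 + i) mod d"
proof (intro allI impI)
  fix i assume "i \<le> N"
  then show "x i = (x 0 + i) mod d"
  proof (induction i)
    case 0
    then show ?case
      using assms(1) by simp
  next
    case (Suc i)
    then show ?case
      using assms(2) by (simp add: mod_Suc_eq)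
  qed
qed

lemma injective_unit_walk_one_direction:
  fixes x :: "nat \<Rightarrow> nat"
  assumes less: "\<forall>i\<le>N. x i < d" and inj: "inj_on x {..N}"
    and step: "\<forall>i<N. x (Suc i) = Suc (x i) mod d \<or> x i = Suc (x (Suc i)) mod d"
  shows "(\<forall>i<N. x (Suc i) = Suc (x i) mod d) \<or> (\<forall>i<N. x i = Suc (x (Suc i)) mod d)"
proof -
  define fwd where "fwd i \<longleftrightarrow> x (Suc i) = Suc (x i) mod d" for i
  define bwd where "bwd i \<longleftrightarrow> x i = Suc (x (Suc i)) mod d" for i
  have step': "fwd i \<or> bwd i" if "i < N" for i
    using step that unfolding fwd_def bwd_def by blast
  have no_turn: "\<not> (fwd i \<and> bwd (Suc i)) \<and> \<not> (bwd i \<and> fwd (Suc i))" if "Suc i < N" for i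
  proof -
    have "x i \<noteq> x (Suc (Suc i))"
      using inj_onD[OF inj, of i "Suc (Suc i)"] that by auto
    moreover have "x i < d" "x (Suc (Suc i)) < d"
      using less that by auto
    ultimately show ?thesis
      using mod_add_left_cancel_less[of 1 "x i" d "x (Suc (Suc i))"] unfolding fwd_def bwd_def by auto
  qed
  have persists: "P i" if "P 0" "\<And>i. Suc i < N \<Longrightarrow> P i \<Longrightarrow> P (Suc i)" "i < N" for P i
    using that(3) by (induction i) (use that(1,2) in auto)
  have "\<forall>i<N. fwd i" if "fwd 0"
    using persists[of fwd] that no_turn step' by blast
  moreover have "\<forall>i<N. bwd i" if "bwd 0"
    using persists[of bwd] that no_turn step' by blast
  moreover have "fwd 0 \<or> bwd 0" if "N \<noteq> 0"
    using step' that by simp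
  ultimately show ?thesis
    unfolding fwd_def bwd_def by (cases "N = 0") blast+
qed

definition oriented :: "bool \<Rightarrow> nat \<Rightarrow> nat \<Rightarrow> nat" where
  "oriented backward N i = (if backward then N - i else i)"

lemma injective_unit_walk_monotone:
  fixes x :: "nat \<Rightarrow> nat"
  assumes less: "\<forall>i\<le>N. x i < d" and inj: "inj_on x {..N}"
    and step: "\<forall>i<N. x (Suc i) = Suc (x i) mod d \<or> x i = Suc (x (Suc i)) mod d"
  obtains j backward where "j < d" "\<And>i. i \<le> N \<Longrightarrow> x i = (j + oriented backward N i) mod d"
  using injective_unit_walk_one_direction[OF assms]
proof
  assume "\<forall>i<N. x (Suc i) = Suc (x i) mod d"
  then have forward: "\<forall>i\<le>N. x i = (x 0 + i) mod d"
    using unit_walk_forward less by blast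
  show ?thesis
  proof (rule that[of "x 0" False])
    show "x 0 < d"
      using less by simp
    show "x i = (x 0 + oriented False N i) mod d" if "i \<le> N" for i
      unfolding oriented_def if_False using forward that by blast
  qed
next
  assume bwd: "\<forall>i<N. x i = Suc (x (Suc i)) mod d"
  have "x (N - Suc i) = Suc (x (N - i)) mod d" if "i < N" for i
  proof -
    have "N - Suc i < N" "Suc (N - Suc i) = N - i"
      using that by auto
    then show ?thesis
      using bwd by metis
  qed
  then have "\<forall>i\<le>N. (\<lambda>i. x (N - i)) i = ((\<lambda>i. x (N - i)) 0 + i) mod d"
    using less by (intro unit_walk_forward) auto
  then have reversed: "x (N - i) = (x N + i) mod d" if "i \<le> N" for i
    using that by simp
  have backward: "x i = (x N + (N - i)) mod d" if "i \<le> N" for i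
    using reversed[of "N - i"] that by simp
  show ?thesis
  proof (rule that[of "x N" True])
    show "x N < d"
      using less by simp
    show "x i = (x N + oriented True N i) mod d" if "i \<le> N" for i
      unfolding oriented_def if_True using backward that .
  qed
qed

lemma hub_edge_iff:
  assumes t: "3 \<le> t" and m: "m \<in> {1..t}" and q: "1 \<le> q" "q < t"
  shows "{m, cycle_walk t m q} \<in> theta_edges t I \<longleftrightarrow>
    q = 1 \<or> q = t - 1 \<or> (m = 1 \<and> cycle_walk t m q \<in> I) \<or> (cycle_walk t m q = 1 \<and> m \<in> I)"
proof -
  have walk_range: "cycle_walk t m k \<in> {1..t}" for k
    using cycle_walk_in_range t by simp
  have walk_1: "cycle_walk t m 1 = cycle_succ t m"
    using cycle_walk_Suc[OF m, of 0] m by simp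
  have "cycle_walk t m q = cycle_succ t m \<longleftrightarrow> q = 1"
  proof
    assume "cycle_walk t m q = cycle_succ t m"
    with walk_1 show "q = 1"
      using cycle_walk_inj[OF m, of q 1] q t by simp
  qed (use walk_1 in simp)
  moreover have "m = cycle_succ t (cycle_walk t m q) \<longleftrightarrow> q = t - 1"
  proof
    assume "m = cycle_succ t (cycle_walk t m q)"
    then have "cycle_walk t m (Suc q) = cycle_walk t m 0"
      using cycle_walk_Suc[OF m] m by simp
    then have "\<not> Suc q < t"
      using cycle_walk_inj[OF m, of "Suc q" 0] t by auto
    with q show "q = t - 1"
      by simp
  next
    assume "q = t - 1"
    with q have "Suc q = t"
      by simp
    then show "m = cycle_succ t (cycle_walk t m q)"
      using cycle_walk_Suc[OF m, of q] cycle_walk_period[OF m] by simp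
  qed
  ultimately show ?thesis
    using theta_edge_iff[OF m walk_range t] by auto
qed

text \<open>The neighbours of m in theta, numbered 0, ..., t - 2 along the path that remains when m is
  deleted from the cycle.\<close>
definition neighbour_steps :: "nat \<Rightarrow> nat set \<Rightarrow> nat \<Rightarrow> nat set" where
  "neighbour_steps t I m = {q - 1 | q. q \<in> {1..<t} \<and> {m, cycle_walk t m q} \<in> theta_edges t I}"

lemma neighbour_steps_eq_image:
  "neighbour_steps t I m = (\<lambda>q. q - 1) ` {q \<in> {1..<t}. {m, cycle_walk t m q} \<in> theta_edges t I}"
  unfolding neighbour_steps_def by auto

lemma neighbour_steps_at_one:
  assumes t: "3 \<le> t" and I: "I \<subseteq> {3..<t}"
  shows "neighbour_steps t I 1 = spoke_offsets t I"
proof -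
  have "1 \<notin> I"
    using I by auto
  have walk: "cycle_walk t 1 q = q + 1" if "q < t" for q
    using that unfolding cycle_walk_def by simp
  have edge: "{1, cycle_walk t 1 q} \<in> theta_edges t I \<longleftrightarrow> q = 1 \<or> q = t - 1 \<or> q + 1 \<in> I"
    if "1 \<le> q" "q < t" for q
    using hub_edge_iff[of t 1 q I] walk[OF that(2)] \<open>1 \<notin> I\<close> that t by auto
  show ?thesis
  proof
    show "neighbour_steps t I 1 \<subseteq> spoke_offsets t I"
    proof
      fix z assume "z \<in> neighbour_steps t I 1"
      then obtain q where q: "z = q - 1" "1 \<le> q" "q < t" "q = 1 \<or> q = t - 1 \<or> q + 1 \<in> I"
        unfolding neighbour_steps_def using edge by auto
      then show "z \<in> spoke_offsets t I"
        unfolding spoke_offsets_def by (auto intro: image_eqI[of _ _ "q + 1"])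
    qed
  next
    show "spoke_offsets t I \<subseteq> neighbour_steps t I 1"
    proof
      fix z assume "z \<in> spoke_offsets t I"
      then obtain q where q: "z = q - 1" "1 \<le> q" "q < t" "q = 1 \<or> q = t - 1 \<or> q + 1 \<in> I"
      proof (unfold spoke_offsets_def, elim UnE insertE imageE)
        fix i assume "i \<in> I" "z = i - 2"
        moreover have "3 \<le> i" "i < t"
          using subsetD[OF I \<open>i \<in> I\<close>] by auto
        ultimately show thesis
          using that[of "i - 1"] by simp
      qed (use that t in \<open>auto intro: that[of 1] that[of "t - 1"]\<close>)
      then show "z \<in> neighbour_steps t I 1"
        unfolding neighbour_steps_def using edge by auto
    qed
  qed
qed

lemma neighbour_steps_no_chords:
  assumes t: "3 \<le> t" and m: "m \<in> {1..t}"
  shows "neighbour_steps t {} m = spoke_offsets t {}"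
proof -
  have "{q \<in> {1..<t}. {m, cycle_walk t m q} \<in> theta_edges t {}} = {1, t - 1}"
    using hub_edge_iff[OF t m, of _ "{}"] t by auto
  then have "neighbour_steps t {} m = (\<lambda>q. q - 1) ` {1, t - 1}"
    unfolding neighbour_steps_eq_image by simp
  then show ?thesis
    unfolding spoke_offsets_def by (simp add: numeral_2_eq_2)
qed

lemma neighbour_steps_chord_at_hub:
  assumes m: "3 \<le> m" "m < t"
  shows "neighbour_steps t {m} m = reflect_offsets t (spoke_offsets t {m})"
proof -
  have t: "3 \<le> t" and m_range: "m \<in> {1..t}" and "t - 2 - (m - 2) = t - m"
    using m by auto
  have "cycle_walk t m (t + 1 - m) = 1"
    using m unfolding cycle_walk_def by simp
  then have to_1: "cycle_walk t m q = 1 \<longleftrightarrow> q = t + 1 - m" if "q < t" for q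
    using cycle_walk_inj[OF m_range that, of "t + 1 - m"] m by auto
  have "{q \<in> {1..<t}. {m, cycle_walk t m q} \<in> theta_edges t {m}} = {1, t - 1, t + 1 - m}"
    using hub_edge_iff[OF t m_range, of _ "{m}"] to_1 m by auto
  then have "neighbour_steps t {m} m = (\<lambda>q. q - 1) ` {1, t - 1, t + 1 - m}"
    unfolding neighbour_steps_eq_image by simp
  also have "\<dots> = {t - 2, 0, t - m}"
    using m by (auto simp: numeral_2_eq_2)
  also have "\<dots> = reflect_offsets t (spoke_offsets t {m})"
    using \<open>t - 2 - (m - 2) = t - m\<close> unfolding reflect_offsets_def spoke_offsets_def
    by (simp only: Un_insert_left Un_empty_left image_insert image_empty diff_zero diff_self_eq_0)
  finally show ?thesis .
qed

section \<open>Copies of theta with a single hub\<close>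

locale one_hub_theta =
  fixes d s t :: nat and I :: "nat set" and H :: "(nat + nat) set set"
    and f :: "nat \<Rightarrow> nat + nat" and m a :: nat
  assumes t_ge: "3 \<le> t" and d_gt: "t < d" and chords: "I \<subseteq> {3..<t}"
    and wheel: "H \<subseteq> wheel_edges d s"
    and bij: "bij_betw f {1..t} (\<Union>H)"
    and H_image: "H = (\<lambda>e. f ` e) ` theta_edges t I"
    and one_hub: "\<Union>H \<inter> hubs s = {Inl a}"
    and hub: "m \<in> {1..t}" "f m = Inl a"
begin

lemma edge_image:
  assumes "{x, y} \<in> theta_edges t I"
  shows "{f x, f y} \<in> H"
  using imageI[OF assms, of "\<lambda>e. f ` e"] unfolding H_image by simp

lemma walk_in_range: "cycle_walk t m q \<in> {1..t}"
  using cycle_walk_in_range t_ge by simp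

lemma walk_ne_hub: "1 \<le> q \<Longrightarrow> q < t \<Longrightarrow> cycle_walk t m q \<noteq> m"
  using cycle_walk_inj[OF hub(1), of q 0] hub(1) by auto

lemma walk_edge: "{cycle_walk t m q, cycle_walk t m (Suc q)} \<in> theta_edges t I"
  using theta_edge_iff[OF walk_in_range[of q] walk_in_range[of "Suc q"] t_ge]
  by (simp add: cycle_walk_Suc[OF hub(1)])

lemma rim_vertex:
  assumes "v \<in> {1..t}" "v \<noteq> m"
  obtains x where "x < d" "f v = Inr x"
proof -
  have "f v \<in> \<Union>H"
    using bij_betw_apply[OF bij assms(1)] .
  then obtain e where "e \<in> H" "f v \<in> e"
    by blast
  with wheel have "e \<in> wheel_edges d s"
    by blast
  then have "f v \<in> hubs s \<or> (\<exists>x<d. f v = Inr x)"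
    using \<open>f v \<in> e\<close> d_gt by (cases rule: wheel_edge_cases) (auto simp: hubs_def rim_edge_def)
  moreover have "f v \<notin> hubs s"
  proof
    assume "f v \<in> hubs s"
    with \<open>f v \<in> \<Union>H\<close> have "f v \<in> \<Union>H \<inter> hubs s"
      by (rule IntI)
    with one_hub hub(2) have "f v = f m"
      by simp
    with assms hub(1) show False
      using bij_betw_imp_inj_on[OF bij] by (meson inj_onD)
  qed
  ultimately show ?thesis
    using that by blast
qed

definition rim_index :: "nat \<Rightarrow> nat" where
  "rim_index q = projr (f (cycle_walk t m q))"

lemma rim_index_walk:
  assumes "1 \<le> q" "q < t"
  shows "f (cycle_walk t m q) = Inr (rim_index q)" "rim_index q < d"
proof -
  obtain x where "x < d" "f (cycle_walk t m q) = Inr x"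
    using rim_vertex[OF walk_in_range walk_ne_hub[OF assms]] .
  then show "f (cycle_walk t m q) = Inr (rim_index q)" "rim_index q < d"
    unfolding rim_index_def by simp_all
qed

lemma rim_index_inj: "inj_on rim_index {1..<t}"
proof (rule inj_onI)
  fix q q' assume q: "q \<in> {1..<t}" "q' \<in> {1..<t}" "rim_index q = rim_index q'"
  then have "f (cycle_walk t m q) = f (cycle_walk t m q')"
    using rim_index_walk(1) by auto
  then have "cycle_walk t m q = cycle_walk t m q'"
    using bij_betw_imp_inj_on[OF bij] walk_in_range by (meson inj_onD)
  with q show "q = q'"
    using cycle_walk_inj[OF hub(1)] by auto
qed

lemma rim_index_step:
  assumes "1 \<le> q" "Suc q < t"
  shows "rim_index (Suc q) = Suc (rim_index q) mod d \<or> rim_index q = Suc (rim_index (Suc q)) mod d"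
proof -
  have "{f (cycle_walk t m q), f (cycle_walk t m (Suc q))} \<in> wheel_edges d s"
    using edge_image[OF walk_edge] wheel by blast
  then have "{Inr (rim_index q), Inr (rim_index (Suc q))} \<in> wheel_edges d s"
    using assms rim_index_walk(1) by simp
  then show ?thesis
    by (rule rim_vertices_adjacent)
qed

lemma rim_walk:
  obtains j backward where "j < d"
    "\<And>q. 1 \<le> q \<Longrightarrow> q < t \<Longrightarrow> f (cycle_walk t m q) = Inr ((j + oriented backward (t - 2) (q - 1)) mod d)"
proof -
  define x where "x i = rim_index (Suc i)" for i
  have "\<forall>i\<le>t - 2. x i < d"
    using rim_index_walk(2) t_ge unfolding x_def by auto
  moreover have "inj_on x {..t - 2}"
  proof (rule inj_onI)
    fix i i' assume "i \<in> {..t - 2}" "i' \<in> {..t - 2}" "x i = x i'"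
    then show "i = i'"
      using inj_onD[OF rim_index_inj, of "Suc i" "Suc i'"] t_ge unfolding x_def by auto
  qed
  moreover have "\<forall>i<t - 2. x (Suc i) = Suc (x i) mod d \<or> x i = Suc (x (Suc i)) mod d"
    using rim_index_step unfolding x_def by auto
  ultimately obtain j backward where j: "j < d" "\<And>i. i \<le> t - 2 \<Longrightarrow> x i = (j + oriented backward (t - 2) i) mod d"
    using injective_unit_walk_monotone by blast
  show ?thesis
  proof (rule that[OF j(1)])
    fix q assume q: "1 \<le> q" "q < t"
    then have "f (cycle_walk t m q) = Inr (x (q - 1))"
      using rim_index_walk(1) unfolding x_def by simp
    then show "f (cycle_walk t m q) = Inr ((j + oriented backward (t - 2) (q - 1)) mod d)"
      using j(2)[of "q - 1"] q by simp
  qed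
qed

end

locale placed_one_hub_theta = one_hub_theta +
  fixes j :: nat and backward :: bool
  assumes j_less: "j < d"
    and walk_image:
      "\<And>q. 1 \<le> q \<Longrightarrow> q < t \<Longrightarrow> f (cycle_walk t m q) = Inr ((j + oriented backward (t - 2) (q - 1)) mod d)"
begin

abbreviation hub_offsets :: "nat set" where
  "hub_offsets \<equiv> oriented backward (t - 2) ` neighbour_steps t I m"

lemma walk_adjacent:
  assumes q: "1 \<le> q" "q < t" and q': "1 \<le> q'" "q' < t"
    and edge: "{f (cycle_walk t m q), f (cycle_walk t m q')} \<in> wheel_edges d s"
  shows "q' = Suc q \<or> q = Suc q'"
proof -
  define p p' where "p = oriented backward (t - 2) (q - 1)" and "p' = oriented backward (t - 2) (q' - 1)"
  have "{Inr ((j + p) mod d), Inr ((j + p') mod d)} \<in> wheel_edges d s"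
    using edge unfolding p_def p'_def walk_image[OF q] walk_image[OF q'] .
  then have "(j + p') mod d = Suc ((j + p) mod d) mod d \<or> (j + p) mod d = Suc ((j + p') mod d) mod d"
    by (rule rim_vertices_adjacent)
  then have "(j + p') mod d = (j + Suc p) mod d \<or> (j + p) mod d = (j + Suc p') mod d"
    by (simp add: mod_Suc_eq)
  moreover have "Suc p < d" "Suc p' < d"
    using q q' d_gt unfolding p_def p'_def oriented_def by auto
  ultimately have "p' = Suc p \<or> p = Suc p'"
    using mod_add_left_cancel_less[of j] by (meson Suc_lessD)
  with q q' show ?thesis
    unfolding p_def p'_def oriented_def by (auto split: if_splits)
qed

text \<open>A chord avoiding the hub would be mapped to a rim edge joining two path vertices that are not
  consecutive.\<close>
lemma chord_at_hub:
  assumes "i \<in> I"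
  shows "m = 1 \<or> m = i"
proof (rule ccontr)
  assume off: "\<not> (m = 1 \<or> m = i)"
  have i: "3 \<le> i" "i < t"
    using chords assms by auto
  obtain q1 where q1: "q1 < t" "cycle_walk t m q1 = 1"
    using cycle_walk_surj[OF hub(1), of 1] t_ge by auto
  obtain q2 where q2: "q2 < t" "cycle_walk t m q2 = i"
    using cycle_walk_surj[OF hub(1), of i] i by auto
  have "q1 \<noteq> 0" "q2 \<noteq> 0"
    using q1(2) q2(2) off cycle_walk_0[OF hub(1)] by metis+
  have "{cycle_walk t m q1, cycle_walk t m q2} \<in> theta_edges t I"
    unfolding q1 q2 theta_edges_def using assms by blast
  then have "{f (cycle_walk t m q1), f (cycle_walk t m q2)} \<in> wheel_edges d s"
    using edge_image wheel by blast
  then have "q2 = Suc q1 \<or> q1 = Suc q2"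
    using walk_adjacent \<open>q1 \<noteq> 0\<close> \<open>q2 \<noteq> 0\<close> q1(1) q2(1) by simp
  then show False
  proof
    assume "q2 = Suc q1"
    then have "i = cycle_succ t 1"
      using q1 q2 cycle_walk_Suc[OF hub(1)] by metis
    with i show False
      unfolding cycle_succ_def by (auto split: if_splits)
  next
    assume "q1 = Suc q2"
    then have "1 = cycle_succ t i"
      using q1 q2 cycle_walk_Suc[OF hub(1)] by metis
    with i show False
      unfolding cycle_succ_def by (auto split: if_splits)
  qed
qed

lemma path_edge_image:
  assumes "1 \<le> q" "Suc q < t"
  shows "{f (cycle_walk t m q), f (cycle_walk t m (Suc q))}
    = rim_edge d (j + (if backward then t - 2 - q else q - 1))"
proof -
  have "{f (cycle_walk t m q), f (cycle_walk t m (Suc q))}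
      = {Inr ((j + oriented backward (t - 2) (q - 1)) mod d), Inr ((j + oriented backward (t - 2) q) mod d)}"
    using walk_image[of q] walk_image[of "Suc q"] assms by simp
  moreover have "oriented backward (t - 2) (q - 1) = (if backward then Suc (t - 2 - q) else q - 1)"
    "oriented backward (t - 2) q = (if backward then t - 2 - q else Suc (q - 1))"
    using assms unfolding oriented_def by auto
  ultimately show ?thesis
    unfolding rim_edge_def by (cases backward) (simp_all add: insert_commute)
qed

lemma rim_edge_in_H:
  assumes "r < t - 2"
  shows "rim_edge d (j + r) \<in> H"
proof -
  define q where "q = (if backward then t - 2 - r else Suc r)"
  have q: "1 \<le> q" "Suc q < t" "(if backward then t - 2 - q else q - 1) = r"
    using assms unfolding q_def by auto
  have "{f (cycle_walk t m q), f (cycle_walk t m (Suc q))} \<in> H"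
    by (rule edge_image[OF walk_edge])
  then show ?thesis
    using path_edge_image[OF q(1,2)] unfolding q(3) by simp
qed

lemma spoke_image:
  assumes "y \<in> {1..t}" "y \<noteq> m" "{m, y} \<in> theta_edges t I"
  obtains z where "z \<in> hub_offsets" "{f m, f y} = {Inl a, Inr ((j + z) mod d)}"
proof -
  obtain q where q: "q < t" "cycle_walk t m q = y"
    using cycle_walk_surj[OF hub(1) assms(1)] by blast
  with assms(2) have "q \<noteq> 0"
    using cycle_walk_0[OF hub(1)] by metis
  with q assms(3) have "q - 1 \<in> neighbour_steps t I m"
    unfolding neighbour_steps_def by auto
  moreover have "f y = Inr ((j + oriented backward (t - 2) (q - 1)) mod d)"
    using walk_image[of q] q \<open>q \<noteq> 0\<close> by auto
  ultimately show ?thesis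
    using that[of "oriented backward (t - 2) (q - 1)"] hub(2) by simp
qed

lemma spoke_in_H:
  assumes "z \<in> hub_offsets"
  shows "{Inl a, Inr ((j + z) mod d)} \<in> H"
proof -
  obtain q where q: "z = oriented backward (t - 2) (q - 1)" "1 \<le> q" "q < t" "{m, cycle_walk t m q} \<in> theta_edges t I"
    using assms unfolding neighbour_steps_def by auto
  then have "{f m, f (cycle_walk t m q)} \<in> H"
    using edge_image by blast
  then show ?thesis
    using walk_image[OF q(2,3)] hub(2) q(1) by simp
qed

lemma hub_edge_in_hub_copy:
  assumes "y \<in> {1..t}" "y \<noteq> m" "{m, y} \<in> theta_edges t I"
  shows "{f m, f y} \<in> hub_copy d t a j hub_offsets"
  using spoke_image[OF assms] spoke_in_hub_copy by metis

lemma path_edge_in_hub_copy: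
  assumes "y \<in> {1..t}" "y \<noteq> m" "cycle_succ t y \<noteq> m"
  shows "{f y, f (cycle_succ t y)} \<in> hub_copy d t a j hub_offsets"
proof -
  obtain q where q: "q < t" "cycle_walk t m q = y"
    using cycle_walk_surj[OF hub(1) assms(1)] by blast
  have "q \<noteq> 0"
    using q(2) assms(2) cycle_walk_0[OF hub(1)] by metis
  moreover have "Suc q \<noteq> t"
    using q(2) assms(3) cycle_walk_Suc[OF hub(1), of q] cycle_walk_period[OF hub(1)] by metis
  ultimately have q': "1 \<le> q" "Suc q < t"
    using q(1) by auto
  define r where "r = (if backward then t - 2 - q else q - 1)"
  have "{f y, f (cycle_succ t y)} = {f (cycle_walk t m q), f (cycle_walk t m (Suc q))}"
    using q(2) cycle_walk_Suc[OF hub(1), of q] by simp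
  also have "\<dots> = rim_edge d (j + r)"
    unfolding r_def by (rule path_edge_image[OF q'])
  moreover have "r < t - 2"
    using q' unfolding r_def by auto
  ultimately show ?thesis
    using rim_edge_in_hub_copy by metis
qed

lemma H_subset_hub_copy: "H \<subseteq> hub_copy d t a j hub_offsets"
proof
  fix e assume "e \<in> H"
  then obtain e' where e': "e' \<in> theta_edges t I" "e = f ` e'"
    unfolding H_image by blast
  obtain y1 y2 where y: "e' = {y1, y2}" "y1 \<in> {1..t}" "y2 \<in> {1..t}" "y1 \<noteq> y2"
    "y2 = cycle_succ t y1 \<or> (y1 = 1 \<and> y2 \<in> I)"
    by (rule theta_edge_cases[OF e'(1) chords t_ge])
  consider "y1 = m" | "y2 = m" | "y1 \<noteq> m" "y2 \<noteq> m"
    by blast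
  then show "e \<in> hub_copy d t a j hub_offsets"
  proof cases
    case 1
    then show ?thesis
      using hub_edge_in_hub_copy[of y2] y e' by simp
  next
    case 2
    then show ?thesis
      using hub_edge_in_hub_copy[of y1] y e' by (simp add: insert_commute)
  next
    case 3
    then have "y2 = cycle_succ t y1"
      using y(5) chord_at_hub by blast
    with 3 show ?thesis
      using path_edge_in_hub_copy[of y1] y e' by simp
  qed
qed

lemma H_eq_hub_copy: "H = hub_copy d t a j hub_offsets"
proof (rule subset_antisym[OF H_subset_hub_copy])
  show "hub_copy d t a j hub_offsets \<subseteq> H"
    unfolding hub_copy_def using rim_edge_in_H spoke_in_H by auto
qed

lemma hub_offsets_cases:
  "hub_offsets = spoke_offsets t I \<or> hub_offsets = reflect_offsets t (spoke_offsets t I)"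
proof -
  have "neighbour_steps t I m = spoke_offsets t I
      \<or> neighbour_steps t I m = reflect_offsets t (spoke_offsets t I)"
  proof (cases "m = 1")
    case True
    then show ?thesis
      using neighbour_steps_at_one[OF t_ge chords] by simp
  next
    case False
    then have "I \<subseteq> {m}"
      using chord_at_hub by blast
    then consider "I = {}" | "I = {m}" "m \<in> {3..<t}"
      using chords by blast
    then show ?thesis
    proof cases
      case 1
      then show ?thesis
        using neighbour_steps_no_chords[OF t_ge hub(1)] by simp
    next
      case 2
      then show ?thesis
        using neighbour_steps_chord_at_hub[of m t] by simp
    qed
  qed
  moreover have "hub_offsets = (if backward then reflect_offsets t (neighbour_steps t I m) else neighbour_steps t I m)"
    unfolding oriented_def reflect_offsets_def by simp
  ultimately show ?thesis
    using reflect_reflect_offsets[OF spoke_offsets_subset[OF chords]] by auto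
qed

end

lemma one_hub_theta_eq_hub_copy:
  assumes t: "3 \<le> t" "t < d" and I: "I \<subseteq> {3..<t}"
    and H: "H \<subseteq> wheel_edges d s" "iso_theta t I H" and one_hub: "card (\<Union>H \<inter> hubs s) = 1"
  obtains a j Z where "a < s" "j < d" "Z \<in> {spoke_offsets t I, reflect_offsets t (spoke_offsets t I)}"
    "H = hub_copy d t a j Z"
proof -
  obtain f where f: "bij_betw f {1..t} (\<Union>H)" "H = (\<lambda>e. f ` e) ` theta_edges t I"
    using H(2) unfolding iso_theta_def by blast
  obtain u where u: "\<Union>H \<inter> hubs s = {u}"
    using card_1_singletonE[OF one_hub] by blast
  then obtain a where a: "a < s" "u = Inl a"
    unfolding hubs_def by blast
  have "u \<in> f ` {1..t}"
    using u bij_betw_imp_surj_on[OF f(1)] by blast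
  then obtain m where m: "m \<in> {1..t}" "f m = Inl a"
    using a(2) by blast
  interpret one_hub_theta d s t I H f m a
    using t I H(1) f u a(2) m by unfold_locales simp_all
  obtain j backward where "j < d"
    "\<And>q. 1 \<le> q \<Longrightarrow> q < t \<Longrightarrow> f (cycle_walk t m q) = Inr ((j + oriented backward (t - 2) (q - 1)) mod d)"
    using rim_walk by blast
  then interpret placed_one_hub_theta d s t I H f m a j backward
    by unfold_locales
  show ?thesis
    using that[OF \<open>a < s\<close> j_less _ H_eq_hub_copy] hub_offsets_cases by blast
qed

lemma card_one_hub_thetas_le:
  assumes s: "1 \<le> s" and t: "4 \<le> t" "2 * t - 3 \<le> d" and I: "I \<subseteq> {3..<t}"
    and e: "e1 \<in> wheel_edges d s" "e2 \<in> wheel_edges d s" "e1 \<noteq> e2"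
  shows "card {H. H \<subseteq> wheel_edges d s \<and> iso_theta t I H \<and> e1 \<in> H \<and> e2 \<in> H \<and> card (\<Union>H \<inter> hubs s) = 1}
    \<le> (\<Sum>Z\<in>{spoke_offsets t I, reflect_offsets t (spoke_offsets t I)}. placement_bound s t Z)"
    (is "card ?P \<le> (\<Sum>Z\<in>?Offsets. _)")
proof -
  let ?copies = "\<lambda>Z. (\<lambda>(a, j). hub_copy d t a j Z) ` placements d s t Z e1 e2"
  have finite_placements: "finite (placements d s t Z e1 e2)" for Z
    by (rule finite_subset[of _ "{..<s} \<times> {..<d}"]) (auto simp: placements_def)
  have "?P \<subseteq> (\<Union>Z\<in>?Offsets. ?copies Z)"
  proof
    fix H assume "H \<in> ?P"
    moreover have "3 \<le> t" "t < d"
      using t by auto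
    ultimately obtain a j Z where "a < s" "j < d" "Z \<in> ?Offsets" "H = hub_copy d t a j Z"
      using one_hub_theta_eq_hub_copy[OF _ _ I] by blast
    with \<open>H \<in> ?P\<close> have "(a, j) \<in> placements d s t Z e1 e2"
      unfolding placements_def by auto
    with \<open>Z \<in> ?Offsets\<close> \<open>H = hub_copy d t a j Z\<close> show "H \<in> (\<Union>Z\<in>?Offsets. ?copies Z)"
      by blast
  qed
  then have "card ?P \<le> card (\<Union>Z\<in>?Offsets. ?copies Z)"
    by (rule card_mono[rotated]) (simp add: finite_placements)
  also have "\<dots> \<le> (\<Sum>Z\<in>?Offsets. card (?copies Z))"
    by (rule card_UN_le) simp
  also have "\<dots> \<le> (\<Sum>Z\<in>?Offsets. card (placements d s t Z e1 e2))"
    by (intro sum_mono card_image_le finite_placements)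
  also have "\<dots> \<le> (\<Sum>Z\<in>?Offsets. placement_bound s t Z)"
  proof (rule sum_mono)
    fix Z assume "Z \<in> ?Offsets"
    then have "Z \<subseteq> {..t - 2}" "0 \<in> Z" "t - 2 \<in> Z"
      using spoke_offsets_subset[OF I] reflect_offsets_subset reflect_offsets_ends[of "spoke_offsets t I" t]
      by auto
    with t show "card (placements d s t Z e1 e2) \<le> placement_bound s t Z"
      using card_placements_le[OF _ _ _ _ _ e s] by simp
  qed
  finally show ?thesis .
qed

lemma sum_placement_bounds_le:
  assumes I: "I \<subseteq> {3..<t}"
  shows "(\<Sum>Z\<in>{spoke_offsets t I, reflect_offsets t (spoke_offsets t I)}. placement_bound s t Z)
    \<le> (if I = fan_chords t then max (s * (t - 3)) (t - 2)
        else if theta_symmetric t I then s * (t - 3)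
        else 2 * s * (t - 3))"
    (is "(\<Sum>Z\<in>{?A, ?B}. _) \<le> _")
proof -
  have A_full: "?A = {..t - 2} \<longleftrightarrow> I = fan_chords t"
    by (rule spoke_offsets_eq_atMost_iff[OF I])
  have B_full: "?B = {..t - 2} \<longleftrightarrow> ?A = {..t - 2}"
    by (rule reflect_offsets_eq_atMost_iff[OF spoke_offsets_subset[OF I]])
  show ?thesis
  proof (cases "I = fan_chords t")
    case True
    with A_full B_full have "?B = ?A" "?A = {..t - 2}"
      by simp_all
    with True show ?thesis
      by (simp add: placement_bound_def)
  next
    case not_fan: False
    with A_full B_full have bounds: "placement_bound s t ?A = s * (t - 3)" "placement_bound s t ?B = s * (t - 3)"
      unfolding placement_bound_def by simp_all
    show ?thesis
    proof (cases "theta_symmetric t I")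
      case True
      then have "?B = ?A"
        by (rule reflect_spoke_offsets_symmetric[OF I])
      with bounds not_fan True show ?thesis
        by simp
    next
      case False
      have "(\<Sum>Z\<in>{?A, ?B}. placement_bound s t Z) \<le> 2 * s * (t - 3)"
        using bounds by (cases "?A = ?B") simp_all
      with not_fan False show ?thesis
        by simp
    qed
  qed
qed

theorem lemma2p1:
  fixes d s t l :: nat and I :: "nat set" and e1 e2 :: "(nat + nat) set"
  assumes "s \<ge> 1" and "d \<ge> 2 * t - 3" and "t \<ge> 4" and "t \<ge> l + 3"
    and "theta_chord_set t l I"
    and "e1 \<in> wheel_edges d s" and "e2 \<in> wheel_edges d s" and "e1 \<noteq> e2"
  shows "card {H. H \<subseteq> wheel_edges d s \<and> iso_theta t I H \<and> e1 \<in> H \<and> e2 \<in> H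
                \<and> card (\<Union>H \<inter> hubs s) = 1}
         \<le> (if I = fan_chords t then max (s * (t - 3)) (t - 2)
            else if theta_symmetric t I then s * (t - 3)
            else 2 * s * (t - 3))"
proof -
  have I: "I \<subseteq> {3..<t}"
    using assms(5) unfolding theta_chord_set_def by blast
  have "card {H. H \<subseteq> wheel_edges d s \<and> iso_theta t I H \<and> e1 \<in> H \<and> e2 \<in> H \<and> card (\<Union>H \<inter> hubs s) = 1}
      \<le> (\<Sum>Z\<in>{spoke_offsets t I, reflect_offsets t (spoke_offsets t I)}. placement_bound s t Z)"
    using card_one_hub_thetas_le[OF _ _ _ I] assms by simp
  also have "\<dots> \<le> (if I = fan_chords t then max (s * (t - 3)) (t - 2)
      else if theta_symmetric t I then s * (t - 3) else 2 * s * (t - 3))"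
    by (rule sum_placement_bounds_le[OF I])
  finally show ?thesis .
qed

end
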